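(* For every odd integer $m\geq 3$, the edge set of $C_m[4]$ cannot be partitioned into one $C_4$-factor and three $C_m$-factors.
   Context: For a graph $G$ and a positive integer $k$, $G[k]$ is the graph with vertex set $V(G)\times\{0,1,\dots,k-1\}$ in which $(u,i)$ and $(w,j)$ are adjacent if and only if $uw\in E(G)$. $C_m$ is the cycle of length $m$. A $C_k$-factor of a graph is a spanning subgraph each of whose components is a cycle of length $k$. *)

theory Defs
  imports Main
begin

definition cycle_graph_edges :: "nat \<Rightarrow> nat set set" where
  "cycle_graph_edges m = {{i, (i + 1) mod m} | i. i < m}"

definition cycle_graph_verts :: "nat \<Rightarrow> nat set" where
  "cycle_graph_verts m = {0..<m}"

definition blowup_verts :: "'a set \<Rightarrow> nat \<Rightarrow> ('a \<times> nat) set" where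
  "blowup_verts V k = V \<times> {0..<k}"

definition blowup_edges :: "'a set set \<Rightarrow> nat \<Rightarrow> ('a \<times> nat) set set" where
  "blowup_edges E k = {{(u, i), (w, j)} | u w i j. {u, w} \<in> E \<and> i < k \<and> j < k}"

definition cycle_edges :: "'a list \<Rightarrow> 'a set set" where
  "cycle_edges vs = {{vs ! i, vs ! ((i + 1) mod length vs)} | i. i < length vs}"

text \<open>F is (the edge set of) a C_k-factor of the graph (V,E): F is a set of edges of E
  such that the spanning subgraph (V,F) has all components cycles of length k.\<close>
definition is_cycle_factor :: "'a set \<Rightarrow> 'a set set \<Rightarrow> nat \<Rightarrow> 'a set set \<Rightarrow> bool" where
  "is_cycle_factor V E k F \<longleftrightarrow>
     F \<subseteq> E \<and>
     (\<exists>P. \<Union>P = V \<and>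
          (\<forall>X\<in>P. \<forall>Y\<in>P. X \<noteq> Y \<longrightarrow> X \<inter> Y = {}) \<and>
          (\<forall>e\<in>F. \<exists>X\<in>P. e \<subseteq> X) \<and>
          (\<forall>X\<in>P. \<exists>vs. 3 \<le> k \<and> length vs = k \<and> distinct vs \<and> set vs = X \<and>
                       {e\<in>F. e \<subseteq> X} = cycle_edges vs))"

end

theory Submission
  imports Defs
begin

text \<open>Project \<open>C\<^sub>m[4]\<close> onto \<open>C\<^sub>m\<close> by the layer map \<open>(u, i) \<mapsto> u\<close>. Every edge moves one layer
  forward or backward, so a closed walk of length \<open>n\<close> with \<open>a\<close> forward steps has net
  displacement \<open>2a - n \<equiv> 0 (mod m)\<close> around \<open>C\<^sub>m\<close>. For odd \<open>m\<close> this forces every \<open>m\<close>-cycle to run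
  around in a single direction, so each \<open>C\<^sub>m\<close>-factor gives every vertex exactly one neighbour
  in each of its two adjacent layers. Every vertex has four neighbours in each adjacent
  layer, so the \<open>C\<^sub>4\<close>-factor also has exactly one there. Hence its 4-cycles never turn back,
  run around \<open>C\<^sub>m\<close> in a single direction as well, and \<open>m\<close> would divide 4.\<close>

lemma succ_mod_iff_pred_mod:
  fixes a b n :: nat
  assumes "a < n" "b < n"
  shows "a = (b + 1) mod n \<longleftrightarrow> b = (a + (n - 1)) mod n"
  using assms by (cases "b + 1 < n"; cases "a = 0") (auto simp: mod_if)

lemma add_1_mod_neq_add_pred_mod:
  fixes a m :: nat
  assumes "3 \<le> m" "a < m"
  shows "(a + 1) mod m \<noteq> (a + (m - 1)) mod m"
  using assms by (cases "a + 1 < m"; cases "a = 0") (auto simp: mod_if)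

lemma cyclically_constant_iff:
  fixes n :: nat
  assumes "0 < n"
  shows "(\<forall>i<n. P ((i + (n - 1)) mod n) = P i) \<longleftrightarrow> (\<forall>i<n. P i) \<or> (\<forall>i<n. \<not> P i)"
proof
  assume agree: "\<forall>i<n. P ((i + (n - 1)) mod n) = P i"
  have "P i = P 0" if "i < n" for i
    using that
  proof (induction i)
    case (Suc i)
    have "(Suc i + (n - 1)) mod n = i"
      using Suc.prems by (simp add: mod_if)
    then show ?case using agree Suc by fastforce
  qed simp
  then show "(\<forall>i<n. P i) \<or> (\<forall>i<n. \<not> P i)" by blast
qed (use assms in auto)

lemma sum_rotate_mod:
  fixes n :: nat
  assumes "0 < n"
  shows "(\<Sum>k<n. g ((k + 1) mod n)) = (\<Sum>k<n. g k)"
proof -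
  obtain p where n: "n = Suc p" using assms gr0_implies_Suc by blast
  have "(\<Sum>k<Suc p. g ((k + 1) mod Suc p)) = (\<Sum>k<p. g (Suc k)) + g 0"
    by (simp add: sum.lessThan_Suc)
  also have "\<dots> = (\<Sum>k<Suc p. g k)"
    by (subst sum.lessThan_Suc_shift) (simp add: add.commute)
  finally show ?thesis using n by simp
qed

lemma closed_walk_winding:
  fixes L :: "nat \<Rightarrow> nat" and P :: "nat \<Rightarrow> bool"
  assumes "0 < n" "0 < m"
    and step: "\<And>k. k < n \<Longrightarrow> L ((k + 1) mod n) = (L k + (if P k then 1 else m - 1)) mod m"
  shows "int m dvd 2 * int (card {k. k < n \<and> P k}) - int n"
proof -
  define s where "s k = 2 * of_bool (P k) - (1 :: int)" for k
  have "int m dvd int (L ((k + 1) mod n)) - int (L k) - s k" if "k < n" for k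
  proof -
    have "int (L ((k + 1) mod n)) = (int (L k) + (if P k then 1 else int m - 1)) mod int m"
      using step[OF that] \<open>0 < m\<close> by (simp add: zmod_int of_nat_diff)
    also have "\<dots> = (int (L k) + s k) mod int m"
      using mod_add_self2[of "int (L k) - 1" "int m"] by (simp add: s_def algebra_simps)
    finally have "int (L ((k + 1) mod n)) mod int m = (int (L k) + s k) mod int m"
      by simp
    then have "int m dvd int (L ((k + 1) mod n)) - (int (L k) + s k)"
      by (simp only: mod_eq_dvd_iff)
    then show ?thesis by (simp add: algebra_simps)
  qed
  then have "int m dvd (\<Sum>k<n. int (L ((k + 1) mod n)) - int (L k) - s k)"
    by (intro dvd_sum) simp
  also have "(\<Sum>k<n. int (L ((k + 1) mod n)) - int (L k) - s k) = - (\<Sum>k<n. s k)"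
    using sum_rotate_mod[OF \<open>0 < n\<close>, of "\<lambda>k. int (L k)"] by (simp add: sum_subtractf)
  also have "(\<Sum>k<n. s k) = 2 * int (card {k. k < n \<and> P k}) - int n"
  proof -
    have "{..<n} \<inter> {k. P k} = {k. k < n \<and> P k}" by auto
    then show ?thesis by (simp add: s_def sum_subtractf sum_distrib_left[symmetric])
  qed
  finally show ?thesis by (simp only: dvd_minus_iff)
qed

lemma blowup_edge_iff:
  "{v, w} \<in> blowup_edges E k \<longleftrightarrow> {fst v, fst w} \<in> E \<and> snd v < k \<and> snd w < k"
proof
  assume "{v, w} \<in> blowup_edges E k"
  then obtain u u' i j where "{v, w} = {(u, i), (u', j)}" "{u, u'} \<in> E" "i < k" "j < k"
    unfolding blowup_edges_def by blast
  then show "{fst v, fst w} \<in> E \<and> snd v < k \<and> snd w < k"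
    by (auto simp: doubleton_eq_iff insert_commute)
next
  assume "{fst v, fst w} \<in> E \<and> snd v < k \<and> snd w < k"
  then show "{v, w} \<in> blowup_edges E k"
    unfolding blowup_edges_def by (cases v, cases w) auto
qed

lemma cycle_graph_edge_iff:
  "{a, b} \<in> cycle_graph_edges m \<longleftrightarrow>
     a < m \<and> b < m \<and> (b = (a + 1) mod m \<or> b = (a + (m - 1)) mod m)"
proof
  assume "{a, b} \<in> cycle_graph_edges m"
  then obtain l where l: "{a, b} = {l, (l + 1) mod m}" "l < m"
    unfolding cycle_graph_edges_def by blast
  then have "a < m" "b < m" by (auto simp: doubleton_eq_iff)
  from l consider "a = l" "b = (l + 1) mod m" | "a = (l + 1) mod m" "b = l"
    by (auto simp: doubleton_eq_iff)
  then show "a < m \<and> b < m \<and> (b = (a + 1) mod m \<or> b = (a + (m - 1)) mod m)"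
    using succ_mod_iff_pred_mod[OF \<open>a < m\<close> \<open>b < m\<close>] \<open>a < m\<close> \<open>b < m\<close> by cases auto
next
  assume ab: "a < m \<and> b < m \<and> (b = (a + 1) mod m \<or> b = (a + (m - 1)) mod m)"
  then have "{a, b} = {a, (a + 1) mod m} \<or> {a, b} = {b, (b + 1) mod m}"
    by (metis insert_commute succ_mod_iff_pred_mod)
  with ab show "{a, b} \<in> cycle_graph_edges m"
    unfolding cycle_graph_edges_def by blast
qed

abbreviation cycle_blowup_verts :: "nat \<Rightarrow> nat \<Rightarrow> (nat \<times> nat) set" where
  "cycle_blowup_verts m k \<equiv> blowup_verts (cycle_graph_verts m) k"

abbreviation cycle_blowup_edges :: "nat \<Rightarrow> nat \<Rightarrow> (nat \<times> nat) set set" where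
  "cycle_blowup_edges m k \<equiv> blowup_edges (cycle_graph_edges m) k"

lemma cycle_blowup_verts_eq: "cycle_blowup_verts m k = {0..<m} \<times> {0..<k}"
  by (simp add: blowup_verts_def cycle_graph_verts_def)

lemma cycle_blowup_edge_iff:
  "{v, w} \<in> cycle_blowup_edges m k \<longleftrightarrow>
     v \<in> cycle_blowup_verts m k \<and> w \<in> cycle_blowup_verts m k \<and>
     (fst w = (fst v + 1) mod m \<or> fst w = (fst v + (m - 1)) mod m)"
  by (auto simp: blowup_edge_iff cycle_graph_edge_iff cycle_blowup_verts_eq mem_Times_iff)

text \<open>\<open>d = 1\<close> selects the next layer, \<open>d = m - 1\<close> the previous one.\<close>

definition layer_neighbours :: "nat \<Rightarrow> (nat \<times> nat) set set \<Rightarrow> nat \<Rightarrow> nat \<times> nat \<Rightarrow> (nat \<times> nat) set" where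
  "layer_neighbours m F d v = {w. {v, w} \<in> F \<and> fst w = (fst v + d) mod m}"

lemma layer_neighbours_Un:
  "layer_neighbours m (F \<union> G) d v = layer_neighbours m F d v \<union> layer_neighbours m G d v"
  by (auto simp: layer_neighbours_def)

lemma layer_neighbours_disjoint:
  "F \<inter> G = {} \<Longrightarrow> layer_neighbours m F d v \<inter> layer_neighbours m G d v = {}"
  by (auto simp: layer_neighbours_def)

lemma finite_layer_neighbours:
  assumes "F \<subseteq> cycle_blowup_edges m k"
  shows "finite (layer_neighbours m F d v)"
proof (rule finite_subset)
  show "layer_neighbours m F d v \<subseteq> {(fst v + d) mod m} \<times> {0..<k}"
    using assms by (auto simp: layer_neighbours_def cycle_blowup_edge_iff cycle_blowup_verts_eq)
qed simp

lemma layer_neighbours_cycle_blowup: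
  assumes "v \<in> cycle_blowup_verts m k" "d \<in> {1, m - 1}"
  shows "layer_neighbours m (cycle_blowup_edges m k) d v = {(fst v + d) mod m} \<times> {0..<k}"
  using assms by (auto simp: layer_neighbours_def cycle_blowup_edge_iff cycle_blowup_verts_eq mem_Times_iff)

lemma cycle_edgesI: "j < length vs \<Longrightarrow> {vs ! j, vs ! ((j + 1) mod length vs)} \<in> cycle_edges vs"
  by (auto simp: cycle_edges_def)

lemma cycle_edges_neighbour_iff:
  assumes "distinct vs" "i < length vs"
  shows "{vs ! i, w} \<in> cycle_edges vs \<longleftrightarrow>
           w = vs ! ((i + 1) mod length vs) \<or> w = vs ! ((i + (length vs - 1)) mod length vs)"
    (is "_ \<longleftrightarrow> w = vs ! ?succ \<or> w = vs ! ?pred")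
proof
  assume "{vs ! i, w} \<in> cycle_edges vs"
  then obtain j where j: "j < length vs" "{vs ! i, w} = {vs ! j, vs ! ((j + 1) mod length vs)}"
    unfolding cycle_edges_def by blast
  have "(j + 1) mod length vs < length vs" by (rule mod_less_divisor) (use j(1) in auto)
  with j assms consider "i = j" "w = vs ! ((j + 1) mod length vs)" | "i = (j + 1) mod length vs" "w = vs ! j"
    by (auto simp: doubleton_eq_iff nth_eq_iff_index_eq)
  then show "w = vs ! ?succ \<or> w = vs ! ?pred"
    using succ_mod_iff_pred_mod[OF assms(2) j(1)] by cases auto
next
  have pred: "?pred < length vs"
    by (rule mod_less_divisor) (use assms(2) in auto)
  have pred_succ: "i = (?pred + 1) mod length vs"
    using succ_mod_iff_pred_mod[OF assms(2) pred] by simp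
  assume "w = vs ! ?succ \<or> w = vs ! ?pred"
  then show "{vs ! i, w} \<in> cycle_edges vs"
    using cycle_edgesI[OF assms(2)] cycle_edgesI[OF pred, folded pred_succ] by (auto simp: insert_commute)
qed

lemma cycle_factor_cycle_through:
  assumes "is_cycle_factor V E k F" "v \<in> V"
  obtains vs where "length vs = k" "distinct vs" "v \<in> set vs" "set vs \<subseteq> V"
    "cycle_edges vs \<subseteq> F" "\<forall>w. {v, w} \<in> F \<longleftrightarrow> {v, w} \<in> cycle_edges vs"
proof -
  obtain P where P: "\<Union>P = V" "\<forall>X\<in>P. \<forall>Y\<in>P. X \<noteq> Y \<longrightarrow> X \<inter> Y = {}" "\<forall>e\<in>F. \<exists>X\<in>P. e \<subseteq> X"
    "\<forall>X\<in>P. \<exists>vs. 3 \<le> k \<and> length vs = k \<and> distinct vs \<and> set vs = X \<and> {e\<in>F. e \<subseteq> X} = cycle_edges vs"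
    using assms(1) unfolding is_cycle_factor_def by blast
  obtain X where X: "X \<in> P" "v \<in> X" using P(1) assms(2) by (metis UnionE)
  obtain vs where vs: "3 \<le> k" "length vs = k" "distinct vs" "set vs = X"
    "{e\<in>F. e \<subseteq> X} = cycle_edges vs"
    using bspec[OF P(4) X(1)] by blast
  have nbrs: "\<forall>w. {v, w} \<in> F \<longleftrightarrow> {v, w} \<in> cycle_edges vs"
  proof (intro allI iffI)
    fix w
    assume "{v, w} \<in> F"
    moreover from this obtain Y where "Y \<in> P" "{v, w} \<subseteq> Y" using P(3) by blast
    moreover from this have "Y = X" using P(2) X by blast
    ultimately show "{v, w} \<in> cycle_edges vs" using vs(5) by blast
  qed (use vs(5) in blast)
  show thesis
  proof (rule that[OF vs(2,3) _ _ _ nbrs])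
    show "v \<in> set vs" using vs(4) X(2) by simp
    show "set vs \<subseteq> V" using vs(4) X(1) P(1) by blast
    show "cycle_edges vs \<subseteq> F" using vs(5) by blast
  qed
qed

definition forward_step :: "nat \<Rightarrow> (nat \<times> nat) list \<Rightarrow> nat \<Rightarrow> bool" where
  "forward_step m vs j \<longleftrightarrow> fst (vs ! ((j + 1) mod length vs)) = (fst (vs ! j) + 1) mod m"

definition layer_monotone :: "nat \<Rightarrow> (nat \<times> nat) list \<Rightarrow> bool" where
  "layer_monotone m vs \<longleftrightarrow>
     (\<forall>j<length vs. forward_step m vs j) \<or> (\<forall>j<length vs. \<not> forward_step m vs j)"

lemma cycle_blowup_layer_step:
  assumes "cycle_edges vs \<subseteq> cycle_blowup_edges m k" "j < length vs"
  shows "fst (vs ! j) < m"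
    and "fst (vs ! ((j + 1) mod length vs)) =
           (fst (vs ! j) + (if forward_step m vs j then 1 else m - 1)) mod m"
  using subsetD[OF assms(1) cycle_edgesI[OF assms(2)]]
  by (auto simp: cycle_blowup_edge_iff cycle_blowup_verts_eq forward_step_def)

lemma cycle_blowup_winding:
  assumes "cycle_edges vs \<subseteq> cycle_blowup_edges m k" "vs \<noteq> []"
  shows "int m dvd 2 * int (card {j. j < length vs \<and> forward_step m vs j}) - int (length vs)"
proof (rule closed_walk_winding[where L = "\<lambda>j. fst (vs ! j)"])
  show "0 < m" using cycle_blowup_layer_step(1)[OF assms(1), of 0] assms(2) by simp
qed (use assms cycle_blowup_layer_step(2)[OF assms(1)] in auto)

lemma layer_monotone_dvd_length:
  assumes "cycle_edges vs \<subseteq> cycle_blowup_edges m k" "vs \<noteq> []" "layer_monotone m vs"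
  shows "m dvd length vs"
proof -
  let ?A = "{j. j < length vs \<and> forward_step m vs j}"
  have "?A = {..<length vs} \<or> ?A = {}"
    using assms(3) unfolding layer_monotone_def by auto
  then have "int m dvd int (length vs)"
    using cycle_blowup_winding[OF assms(1,2)] by (elim disjE) simp_all
  then show ?thesis by simp
qed

lemma odd_length_cycle_layer_monotone:
  assumes "odd m" "cycle_edges vs \<subseteq> cycle_blowup_edges m k" "length vs = m"
  shows "layer_monotone m vs"
proof -
  let ?A = "{j. j < m \<and> forward_step m vs j}"
  have "vs \<noteq> []" using assms(1,3) by auto
  then have "int m dvd (2 * int (card ?A) - int m) + int m"
    using cycle_blowup_winding[OF assms(2)] assms(3) by (intro dvd_add) simp_all
  then have "int m dvd int (2 * card ?A)"
    by simp
  then have "m dvd 2 * card ?A"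
    by (simp only: of_nat_dvd_iff)
  then have dvd: "m dvd card ?A"
    using assms(1) by (simp add: coprime_dvd_mult_right_iff)
  have "card ?A \<le> m"
    using card_mono[of "{..<m}" ?A] by auto
  then have "card ?A = 0 \<or> card ?A = m"
    using dvd_imp_le[OF dvd] by linarith
  then have "?A = {} \<or> ?A = {..<m}"
  proof
    assume "card ?A = m"
    then show ?thesis by (intro disjI2 card_subset_eq) auto
  qed simp
  then show ?thesis
    unfolding layer_monotone_def using assms(3) by auto
qed

lemma forward_step_pred_eq_iff:
  assumes "3 \<le> m" "cycle_edges vs \<subseteq> cycle_blowup_edges m k" "i < length vs"
  shows "forward_step m vs ((i + (length vs - 1)) mod length vs) = forward_step m vs i \<longleftrightarrow>
           fst (vs ! ((i + (length vs - 1)) mod length vs)) \<noteq> fst (vs ! ((i + 1) mod length vs))"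
    (is "forward_step m vs ?p = _ \<longleftrightarrow> _")
proof -
  have p: "?p < length vs" by (rule mod_less_divisor) (use assms(3) in auto)
  have "i = (?p + 1) mod length vs"
    using succ_mod_iff_pred_mod[OF assms(3) p] by simp
  then have "fst (vs ! i) = (fst (vs ! ?p) + (if forward_step m vs ?p then 1 else m - 1)) mod m"
    using cycle_blowup_layer_step(2)[OF assms(2) p] by simp
  moreover have lt: "fst (vs ! i) < m" "fst (vs ! ?p) < m"
    using cycle_blowup_layer_step(1)[OF assms(2)] assms(3) p by auto
  ultimately have "fst (vs ! ?p) = (fst (vs ! i) + (if forward_step m vs ?p then m - 1 else 1)) mod m"
    using succ_mod_iff_pred_mod[OF lt] succ_mod_iff_pred_mod[OF lt(2,1)] assms(1)
    by (cases "forward_step m vs ?p") simp_all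
  then show ?thesis
    using cycle_blowup_layer_step(2)[OF assms(2,3)] add_1_mod_neq_add_pred_mod[OF assms(1) lt(1)] by auto
qed

lemma layer_monotone_iff:
  assumes "3 \<le> m" "cycle_edges vs \<subseteq> cycle_blowup_edges m k" "vs \<noteq> []"
  shows "layer_monotone m vs \<longleftrightarrow>
           (\<forall>i<length vs. fst (vs ! ((i + (length vs - 1)) mod length vs)) \<noteq> fst (vs ! ((i + 1) mod length vs)))"
  using cyclically_constant_iff[of "length vs" "forward_step m vs"] forward_step_pred_eq_iff[OF assms(1,2)] assms(3)
  unfolding layer_monotone_def by auto

lemma card_layer_neighbours_odd_cycle_factor:
  assumes "odd m" "3 \<le> m"
    and F: "is_cycle_factor (cycle_blowup_verts m k) (cycle_blowup_edges m k) m F"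
    and v: "v \<in> cycle_blowup_verts m k" and d: "d \<in> {1, m - 1}"
  shows "card (layer_neighbours m F d v) = 1"
proof -
  obtain vs where vs: "length vs = m" "distinct vs" "v \<in> set vs"
    "set vs \<subseteq> cycle_blowup_verts m k" "cycle_edges vs \<subseteq> F"
    and nbrs: "\<forall>w. {v, w} \<in> F \<longleftrightarrow> {v, w} \<in> cycle_edges vs"
    by (rule cycle_factor_cycle_through[OF F v])
  obtain i where i: "i < m" "vs ! i = v" using vs(1,3) by (auto simp: in_set_conv_nth)
  define pred succ where "pred = vs ! ((i + (m - 1)) mod m)" and "succ = vs ! ((i + 1) mod m)"
  have "{v, w} \<in> cycle_edges vs \<longleftrightarrow> w = succ \<or> w = pred" for w
    using cycle_edges_neighbour_iff[OF vs(2), of i w] i vs(1) by (simp add: pred_def succ_def)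
  then have nbr_iff: "{v, w} \<in> F \<longleftrightarrow> w = succ \<or> w = pred" for w
    using nbrs by blast
  have FE: "F \<subseteq> cycle_blowup_edges m k" using F by (simp add: is_cycle_factor_def)
  then have edges: "cycle_edges vs \<subseteq> cycle_blowup_edges m k" using vs(5) by blast
  have "vs \<noteq> []" using i vs(1) by auto
  with odd_length_cycle_layer_monotone[OF assms(1) edges vs(1)]
  have "\<forall>j<m. fst (vs ! ((j + (m - 1)) mod m)) \<noteq> fst (vs ! ((j + 1) mod m))"
    using layer_monotone_iff[OF assms(2) edges] vs(1) by simp
  then have "fst pred \<noteq> fst succ"
    unfolding pred_def succ_def using i(1) by blast
  moreover have "fst pred \<in> {(fst v + 1) mod m, (fst v + (m - 1)) mod m}"
    and "fst succ \<in> {(fst v + 1) mod m, (fst v + (m - 1)) mod m}"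
    using nbr_iff[of pred] nbr_iff[of succ] FE by (auto simp: cycle_blowup_edge_iff)
  ultimately have "layer_neighbours m F d v = (if fst pred = (fst v + d) mod m then {pred} else {succ})"
    using d unfolding layer_neighbours_def nbr_iff by auto
  then show ?thesis by simp
qed

lemma layer_monotone_if_unique_layer_neighbours:
  assumes "3 \<le> m" and FE: "F \<subseteq> cycle_blowup_edges m k" and vs: "cycle_edges vs \<subseteq> F"
    and "distinct vs" "3 \<le> length vs"
    and unique: "\<And>v d. v \<in> set vs \<Longrightarrow> d \<in> {1, m - 1} \<Longrightarrow> card (layer_neighbours m F d v) \<le> 1"
  shows "layer_monotone m vs"
proof -
  let ?n = "length vs"
  have edges: "cycle_edges vs \<subseteq> cycle_blowup_edges m k" using FE vs by blast
  have "fst (vs ! ((i + (?n - 1)) mod ?n)) \<noteq> fst (vs ! ((i + 1) mod ?n))" if i: "i < ?n" for i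
  proof
    define v pred succ where "v = vs ! i" and "pred = vs ! ((i + (?n - 1)) mod ?n)"
      and "succ = vs ! ((i + 1) mod ?n)"
    assume same: "fst pred = fst succ"
    have n: "0 < ?n" using i by linarith
    have "(i + (?n - 1)) mod ?n \<noteq> (i + 1) mod ?n"
      using add_1_mod_neq_add_pred_mod[OF assms(5) i] by argo
    then have "pred \<noteq> succ"
      unfolding pred_def succ_def
      using nth_eq_iff_index_eq[OF \<open>distinct vs\<close> mod_less_divisor[OF n] mod_less_divisor[OF n]] by blast
    have "{v, pred} \<in> cycle_edges vs" "{v, succ} \<in> cycle_edges vs"
      using cycle_edges_neighbour_iff[OF \<open>distinct vs\<close> i] unfolding v_def pred_def succ_def
      by blast+
    then have F: "{v, pred} \<in> F" "{v, succ} \<in> F" using vs by blast+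
    have "{v, succ} \<in> cycle_blowup_edges m k" using F(2) FE by blast
    then have "fst succ = (fst v + 1) mod m \<or> fst succ = (fst v + (m - 1)) mod m"
      by (simp add: cycle_blowup_edge_iff)
    then obtain d where d: "d \<in> {1, m - 1}" "fst succ = (fst v + d) mod m"
      by blast
    have "pred \<in> layer_neighbours m F d v" "succ \<in> layer_neighbours m F d v"
      using F d(2) same by (simp_all add: layer_neighbours_def)
    moreover have "finite (layer_neighbours m F d v)"
      by (rule finite_layer_neighbours[OF FE])
    moreover have "card (layer_neighbours m F d v) \<le> 1"
      using unique d(1) i by (simp add: v_def)
    ultimately show False
      using \<open>pred \<noteq> succ\<close> by (auto simp: card_le_Suc0_iff_eq)
  qed
  moreover have "vs \<noteq> []" using assms(5) by auto
  ultimately show ?thesis using layer_monotone_iff[OF assms(1) edges] by blast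
qed

lemma card_layer_neighbours_residual_factor:
  assumes "odd m" "3 \<le> m"
    and F: "is_cycle_factor (cycle_blowup_verts m k) (cycle_blowup_edges m k) m F1"
      "is_cycle_factor (cycle_blowup_verts m k) (cycle_blowup_edges m k) m F2"
      "is_cycle_factor (cycle_blowup_verts m k) (cycle_blowup_edges m k) m F3"
    and disjoint: "F0 \<inter> F1 = {}" "F0 \<inter> F2 = {}" "F0 \<inter> F3 = {}"
      "F1 \<inter> F2 = {}" "F1 \<inter> F3 = {}" "F2 \<inter> F3 = {}"
    and cover: "F0 \<union> F1 \<union> F2 \<union> F3 = cycle_blowup_edges m k"
    and v: "v \<in> cycle_blowup_verts m k" and d: "d \<in> {1, m - 1}"
  shows "card (layer_neighbours m F0 d v) = k - 3"
proof -
  let ?E = "cycle_blowup_edges m k"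
  have sub: "F0 \<subseteq> ?E" "F1 \<subseteq> ?E" "F2 \<subseteq> ?E" "F3 \<subseteq> ?E"
    using cover by blast+
  have fin: "finite (layer_neighbours m F d v)" if "F \<subseteq> ?E" for F
    using finite_layer_neighbours[OF that] .
  have "k = card (layer_neighbours m ?E d v)"
    using layer_neighbours_cycle_blowup[OF v d] by simp
  also have "\<dots> = card (layer_neighbours m F0 d v) + card (layer_neighbours m F1 d v)
                   + card (layer_neighbours m F2 d v) + card (layer_neighbours m F3 d v)"
    unfolding cover[symmetric] layer_neighbours_Un using disjoint
    by (simp add: card_Un_disjoint fin sub Int_Un_distrib2 layer_neighbours_disjoint)
  also have "\<dots> = card (layer_neighbours m F0 d v) + 3"
    using card_layer_neighbours_odd_cycle_factor[OF assms(1,2) _ v d] F by simp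
  finally show ?thesis by simp
qed

theorem mainTheorem5:
  fixes m :: nat
  assumes "odd m" and "3 \<le> m"
  shows "\<not> (\<exists>F0 F1 F2 F3.
            is_cycle_factor (blowup_verts (cycle_graph_verts m) 4)
                            (blowup_edges (cycle_graph_edges m) 4) 4 F0 \<and>
            is_cycle_factor (blowup_verts (cycle_graph_verts m) 4)
                            (blowup_edges (cycle_graph_edges m) 4) m F1 \<and>
            is_cycle_factor (blowup_verts (cycle_graph_verts m) 4)
                            (blowup_edges (cycle_graph_edges m) 4) m F2 \<and>
            is_cycle_factor (blowup_verts (cycle_graph_verts m) 4)
                            (blowup_edges (cycle_graph_edges m) 4) m F3 \<and>
            F0 \<inter> F1 = {} \<and> F0 \<inter> F2 = {} \<and> F0 \<inter> F3 = {} \<and>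
            F1 \<inter> F2 = {} \<and> F1 \<inter> F3 = {} \<and> F2 \<inter> F3 = {} \<and>
            F0 \<union> F1 \<union> F2 \<union> F3 = blowup_edges (cycle_graph_edges m) 4)"
proof
  let ?V = "cycle_blowup_verts m 4" and ?E = "cycle_blowup_edges m 4"
  assume "\<exists>F0 F1 F2 F3. is_cycle_factor ?V ?E 4 F0 \<and> is_cycle_factor ?V ?E m F1 \<and>
    is_cycle_factor ?V ?E m F2 \<and> is_cycle_factor ?V ?E m F3 \<and>
    F0 \<inter> F1 = {} \<and> F0 \<inter> F2 = {} \<and> F0 \<inter> F3 = {} \<and> F1 \<inter> F2 = {} \<and> F1 \<inter> F3 = {} \<and> F2 \<inter> F3 = {} \<and>
    F0 \<union> F1 \<union> F2 \<union> F3 = ?E"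
  then obtain F0 F1 F2 F3 where F0: "is_cycle_factor ?V ?E 4 F0"
    and F: "is_cycle_factor ?V ?E m F1" "is_cycle_factor ?V ?E m F2" "is_cycle_factor ?V ?E m F3"
    and disjoint: "F0 \<inter> F1 = {}" "F0 \<inter> F2 = {}" "F0 \<inter> F3 = {}" "F1 \<inter> F2 = {}" "F1 \<inter> F3 = {}" "F2 \<inter> F3 = {}"
    and cover: "F0 \<union> F1 \<union> F2 \<union> F3 = ?E"
    by blast
  have F0E: "F0 \<subseteq> ?E"
    using cover by blast
  have unique: "card (layer_neighbours m F0 d v) = 1" if "v \<in> ?V" "d \<in> {1, m - 1}" for v d
    using card_layer_neighbours_residual_factor[OF assms F disjoint cover that] by simp
  have "(0, 0) \<in> ?V"
    using assms(2) by (simp add: cycle_blowup_verts_eq)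
  then obtain vs where vs: "length vs = 4" "distinct vs" "set vs \<subseteq> ?V" "cycle_edges vs \<subseteq> F0"
    by (rule cycle_factor_cycle_through[OF F0]) blast
  have "layer_monotone m vs"
  proof (rule layer_monotone_if_unique_layer_neighbours[OF assms(2) F0E vs(4,2)])
    show "card (layer_neighbours m F0 d v) \<le> 1" if "v \<in> set vs" "d \<in> {1, m - 1}" for v d
      using unique[OF subsetD[OF vs(3) that(1)] that(2)] by simp
  qed (simp add: vs(1))
  moreover have "cycle_edges vs \<subseteq> ?E" "vs \<noteq> []"
    using vs(1,4) F0E by auto
  ultimately have "m dvd 4"
    using layer_monotone_dvd_length vs(1) by metis
  then have "m = 3 \<or> m = 4"
    using dvd_imp_le[of m 4] assms(2) by auto
  with \<open>m dvd 4\<close> assms(1) show False by auto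
qed

end
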